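(* For any $\varepsilon \in \{-1,1\}^n$ and any $y \in \mathbb{R}^n$, let $$S = \{1 \le i \le n : \mathrm{sign}(y_i) \neq \varepsilon_i\}.$$ Then $$\left\| y - \left\langle y, \frac{\varepsilon}{\|\varepsilon\|}\right\rangle \frac{\varepsilon}{\|\varepsilon\|}\right\|^2 \ge \frac{\min\{\#S, n - \#S\}}{n}\, \|y\|^2.$$
   Context: $\mathrm{sign}(t)$ denotes the sign of a real number $t$ (with $\mathrm{sign}(0)=0$); $\|\cdot\|$ is the Euclidean norm. *)

theory Defs
  imports "HOL-Analysis.Analysis"
begin

end

theory Submission
  imports Defs
begin

text \<open>Removing the component along \<open>\<epsilon>\<close> subtracts \<open>(y \<bullet> \<epsilon>)\<^sup>2 / n\<close> from \<open>\<parallel>y\<parallel>\<^sup>2\<close>.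
  Off \<open>S\<close> the products \<open>y\<^sub>i \<epsilon>\<^sub>i\<close> equal \<open>\<bar>y\<^sub>i\<bar>\<close>, on \<open>S\<close> they equal \<open>-\<bar>y\<^sub>i\<bar>\<close>, so \<open>y \<bullet> \<epsilon>\<close> is a
  difference of two nonnegative sums; its square is at most the larger of their squares,
  and by Cauchy-Schwarz a sum of \<open>m\<close> absolute coordinates has square at most \<open>m \<parallel>y\<parallel>\<^sup>2\<close>.
  Hence \<open>(y \<bullet> \<epsilon>)\<^sup>2 \<le> max #S (n - #S) \<parallel>y\<parallel>\<^sup>2 = (n - min #S (n - #S)) \<parallel>y\<parallel>\<^sup>2\<close>.\<close>

lemma norm_diff_projection_squared:
  fixes y e :: "'a :: real_inner"
  assumes "e \<noteq> 0"
  shows "(norm (y - (y \<bullet> (e /\<^sub>R norm e)) *\<^sub>R (e /\<^sub>R norm e)))\<^sup>2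
           = (norm y)\<^sup>2 - (y \<bullet> e)\<^sup>2 / (norm e)\<^sup>2"
proof -
  define u where "u = e /\<^sub>R norm e"
  have u_unit: "u \<bullet> u = 1"
    using assms by (simp add: u_def power2_norm_eq_inner[symmetric])
  have "(norm (y - (y \<bullet> u) *\<^sub>R u))\<^sup>2 = y \<bullet> y - 2 * (y \<bullet> u)\<^sup>2 + (y \<bullet> u)\<^sup>2 * (u \<bullet> u)"
    unfolding power2_norm_eq_inner
    by (simp add: inner_diff inner_commute power2_eq_square algebra_simps)
  also have "\<dots> = (norm y)\<^sup>2 - (y \<bullet> u)\<^sup>2"
    using u_unit by (simp add: power2_norm_eq_inner)
  also have "(y \<bullet> u)\<^sup>2 = (y \<bullet> e)\<^sup>2 / (norm e)\<^sup>2"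
    by (simp add: u_def power_mult_distrib power_inverse divide_inverse)
  finally show ?thesis by (simp add: u_def)
qed

lemma norm_sign_vector_squared:
  fixes \<epsilon> :: "real ^ 'n"
  assumes "\<forall>i. \<epsilon> $ i \<in> {-1, 1}"
  shows "(norm \<epsilon>)\<^sup>2 = real CARD('n)"
proof -
  have "\<epsilon> $ i * \<epsilon> $ i = 1" for i
    using assms[rule_format, of i] by auto
  then show ?thesis
    by (simp add: power2_norm_eq_inner inner_vec_def)
qed

lemma inner_sign_vector_eq_diff:
  fixes \<epsilon> y :: "real ^ 'n"
  assumes "\<forall>i. \<epsilon> $ i \<in> {-1, 1}"
  defines "S \<equiv> {i. sgn (y $ i) \<noteq> \<epsilon> $ i}"
  shows "y \<bullet> \<epsilon> = (\<Sum>i\<in>-S. \<bar>y $ i\<bar>) - (\<Sum>i\<in>S. \<bar>y $ i\<bar>)"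
proof -
  have off_S: "y $ i * \<epsilon> $ i = \<bar>y $ i\<bar>" if "i \<in> -S" for i
    using that by (simp add: S_def abs_sgn)
  have on_S: "y $ i * \<epsilon> $ i = - \<bar>y $ i\<bar>" if "i \<in> S" for i
  proof (cases "y $ i = 0")
    case False
    then have "sgn (y $ i) \<in> {-1, 1}" and "sgn (y $ i) \<noteq> \<epsilon> $ i"
      using that by (auto simp: S_def sgn_if)
    then have "\<epsilon> $ i = - sgn (y $ i)"
      using assms(1)[rule_format, of i] by auto
    then show ?thesis
      by (simp add: abs_sgn)
  qed simp
  have "y \<bullet> \<epsilon> = (\<Sum>i\<in>-S. y $ i * \<epsilon> $ i) + (\<Sum>i\<in>S. y $ i * \<epsilon> $ i)"
    using sum.subset_diff[of S UNIV "\<lambda>i. y $ i * \<epsilon> $ i"]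
    by (simp add: inner_vec_def Compl_eq_Diff_UNIV)
  also have "\<dots> = (\<Sum>i\<in>-S. \<bar>y $ i\<bar>) - (\<Sum>i\<in>S. \<bar>y $ i\<bar>)"
    using off_S on_S by (simp add: sum_negf)
  finally show ?thesis .
qed

lemma sum_abs_component_squared_le:
  fixes y :: "real ^ 'n"
  shows "(\<Sum>i\<in>A. \<bar>y $ i\<bar>)\<^sup>2 \<le> real (card A) * (norm y)\<^sup>2"
proof -
  have "(\<Sum>i\<in>A. \<bar>y $ i\<bar>)\<^sup>2 \<le> (\<Sum>i\<in>A. (y $ i)\<^sup>2) * real (card A)"
    using sum_squared_le_sum_of_squares[of "\<lambda>i. \<bar>y $ i\<bar>" A] by simp
  also have "\<dots> \<le> (\<Sum>i\<in>UNIV. (y $ i)\<^sup>2) * real (card A)"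
    by (intro mult_right_mono sum_mono2) auto
  also have "(\<Sum>i\<in>UNIV. (y $ i)\<^sup>2) = (norm y)\<^sup>2"
    unfolding power2_norm_eq_inner inner_vec_def by (simp add: power2_eq_square)
  finally show ?thesis
    by (simp add: mult.commute)
qed

lemma diff_squared_le_max_squares:
  fixes a b :: real
  assumes "0 \<le> a" "0 \<le> b"
  shows "(a - b)\<^sup>2 \<le> max (a\<^sup>2) (b\<^sup>2)"
proof (cases "a \<le> b")
  case True
  then have "(b - a)\<^sup>2 \<le> b\<^sup>2"
    using assms by (intro power_mono) auto
  then show ?thesis
    by (simp add: power2_commute)
next
  case False
  then have "(a - b)\<^sup>2 \<le> a\<^sup>2"
    using assms by (intro power_mono) auto
  then show ?thesis
    by simp
qed

lemma inner_sign_vector_squared_le: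
  fixes \<epsilon> y :: "real ^ 'n"
  assumes eps: "\<forall>i. \<epsilon> $ i \<in> {-1, 1}"
  defines "S \<equiv> {i. sgn (y $ i) \<noteq> \<epsilon> $ i}"
  shows "(y \<bullet> \<epsilon>)\<^sup>2 \<le> real (CARD('n) - min (card S) (CARD('n) - card S)) * (norm y)\<^sup>2"
proof -
  define a where "a = (\<Sum>i\<in>-S. \<bar>y $ i\<bar>)"
  define b where "b = (\<Sum>i\<in>S. \<bar>y $ i\<bar>)"
  have card_Compl: "card (-S) = CARD('n) - card S"
    by (simp add: Compl_eq_Diff_UNIV card_Diff_subset)
  have "(y \<bullet> \<epsilon>)\<^sup>2 = (a - b)\<^sup>2"
    using inner_sign_vector_eq_diff[OF eps] by (simp add: a_def b_def S_def)
  also have "\<dots> \<le> max (a\<^sup>2) (b\<^sup>2)"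
    by (rule diff_squared_le_max_squares) (simp_all add: a_def b_def sum_nonneg)
  also have "\<dots> \<le> max (real (CARD('n) - card S) * (norm y)\<^sup>2) (real (card S) * (norm y)\<^sup>2)"
  proof (rule max.mono)
    show "a\<^sup>2 \<le> real (CARD('n) - card S) * (norm y)\<^sup>2"
      using sum_abs_component_squared_le[of y "-S"] by (simp add: a_def card_Compl)
    show "b\<^sup>2 \<le> real (card S) * (norm y)\<^sup>2"
      using sum_abs_component_squared_le[of y S] by (simp add: b_def)
  qed
  also have "\<dots> = real (max (CARD('n) - card S) (card S)) * (norm y)\<^sup>2"
    using max_mult_distrib_right[of "real (CARD('n) - card S)" "real (card S)" "(norm y)\<^sup>2"]
    by simp
  also have "max (CARD('n) - card S) (card S) = CARD('n) - min (card S) (CARD('n) - card S)"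
    using card_mono[of UNIV S] by simp
  finally show ?thesis .
qed

theorem lemma2:
  fixes \<epsilon> y :: "real ^ 'n"
  assumes eps: "\<forall>i. \<epsilon> $ i \<in> {-1, 1}"
  defines "S \<equiv> {i. sgn (y $ i) \<noteq> \<epsilon> $ i}"
  shows "(norm (y - (y \<bullet> (\<epsilon> /\<^sub>R norm \<epsilon>)) *\<^sub>R (\<epsilon> /\<^sub>R norm \<epsilon>)))\<^sup>2
           \<ge> real (min (card S) (CARD('n) - card S)) / real CARD('n) * (norm y)\<^sup>2"
proof -
  define n where "n = CARD('n)"
  define m where "m = min (card S) (n - card S)"
  have "n > 0" "m \<le> n"
    by (simp_all add: n_def m_def)
  have norm_eps: "(norm \<epsilon>)\<^sup>2 = real n"
    using norm_sign_vector_squared[OF eps] by (simp add: n_def)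
  then have "\<epsilon> \<noteq> 0"
    using \<open>n > 0\<close> by auto
  have bound: "(y \<bullet> \<epsilon>)\<^sup>2 \<le> real (n - m) * (norm y)\<^sup>2"
    using inner_sign_vector_squared_le[OF eps] by (simp add: S_def n_def m_def)
  have "real m / real n * (norm y)\<^sup>2 = (norm y)\<^sup>2 - real (n - m) * (norm y)\<^sup>2 / real n"
    using \<open>n > 0\<close> \<open>m \<le> n\<close> by (simp add: of_nat_diff diff_divide_distrib left_diff_distrib)
  also have "\<dots> \<le> (norm y)\<^sup>2 - (y \<bullet> \<epsilon>)\<^sup>2 / real n"
    using bound by (simp add: divide_right_mono)
  also have "\<dots> = (norm (y - (y \<bullet> (\<epsilon> /\<^sub>R norm \<epsilon>)) *\<^sub>R (\<epsilon> /\<^sub>R norm \<epsilon>)))\<^sup>2"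
    using norm_diff_projection_squared[OF \<open>\<epsilon> \<noteq> 0\<close>, of y] by (simp add: norm_eps)
  finally show ?thesis
    by (simp add: n_def m_def)
qed

end
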